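(* Let $\lambda\neq0$ and $U=\{x\in\mathbb R^4:x^2>|x^4|\}$. Write $x^2=\rho\,\mathrm{ch}(\lambda\varphi)$, $x^4=\rho\,\mathrm{sh}(\lambda\varphi)$ with $\rho>0$, $\varphi\in\mathbb R$ (i.e. $\rho=\sqrt{(x^2)^2-(x^4)^2}$, $\lambda\varphi=\operatorname{artanh}(x^4/x^2)$). Then a smooth covector field $A$ on $U$ satisfies $L_\xi A=0$ for $\xi\in\{e_{13}+\lambda e_{24},\,e_1,\,e_3\}$ if and only if there are smooth functions $C_1,\dots,C_4$ of $\rho\in(0,\infty)$ such that $$A_1=C_1(\rho)\cos\varphi+C_2(\rho)\sin\varphi,\quad A_2=C_3(\rho)\,\mathrm{ch}\,\lambda\varphi+C_4(\rho)\,\mathrm{sh}\,\lambda\varphi,$$ $$A_3=-C_1(\rho)\sin\varphi+C_2(\rho)\cos\varphi,\quad A_4=-C_3(\rho)\,\mathrm{sh}\,\lambda\varphi-C_4(\rho)\,\mathrm{ch}\,\lambda\varphi .$$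
   Context: Work in $\mathbb R^4$ with Galilean (Cartesian) coordinates $x^1,x^2,x^3,x^4$ of Minkowski space (metric $\mathrm{diag}(-1,-1,-1,1)$). A potential on an open set $U\subseteq\mathbb R^4$ is a smooth covector field $A=A_i\,dx^i$; its components $A_i$ are always those with respect to the coordinates $x^i$, even when written as functions of other variables. For a vector field $\xi=\xi^k\partial_k$ the Lie derivative is $(L_\xi A)_i=\xi^k\partial_kA_i+A_k\partial_i\xi^k$. The vector fields used are, by components $(\xi^1,\xi^2,\xi^3,\xi^4)$: $e_1=(1,0,0,0)$, $e_2=(0,1,0,0)$, $e_3=(0,0,1,0)$, $e_4=(0,0,0,1)$, $e_{12}=(-x^2,x^1,0,0)$, $e_{13}=(x^3,0,-x^1,0)$, $e_{23}=(0,-x^3,x^2,0)$, $e_{14}=(x^4,0,0,x^1)$, $e_{24}=(0,x^4,0,x^2)$, $e_{34}=(0,0,x^4,x^3)$. A potential admits a family of vector fields if $L_\xi A=0$ for each $\xi$ in it (equivalently for every element of their linear span). "Functions" are smooth real functions; $\mathrm{ch}=\cosh$, $\mathrm{sh}=\sinh$. *)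

theory Defs
  imports "HOL-Analysis.Analysis"
begin

text \<open>A covector field A is a map real^4 => real^4,
  A x $ i being the component A_i at x; a vector field xi likewise gives xi^k.\<close>

primrec Ck_on :: "nat \<Rightarrow> 'a::real_normed_vector set \<Rightarrow> ('a \<Rightarrow> 'b::real_normed_vector) \<Rightarrow> bool" where
  "Ck_on 0 U f = continuous_on U f"
| "Ck_on (Suc k) U f = (f differentiable_on U \<and>
      (\<forall>v. Ck_on k U (\<lambda>x. frechet_derivative f (at x) v)))"

definition smooth_on :: "'a::real_normed_vector set \<Rightarrow> ('a \<Rightarrow> 'b::real_normed_vector) \<Rightarrow> bool" where
  "smooth_on U f \<longleftrightarrow> (\<forall>k. Ck_on k U f)"

definition pd :: "4 \<Rightarrow> (real^4 \<Rightarrow> real) \<Rightarrow> real^4 \<Rightarrow> real" where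
  "pd k f x = frechet_derivative f (at x) (axis k 1)"

definition lie_deriv :: "(real^4 \<Rightarrow> real^4) \<Rightarrow> (real^4 \<Rightarrow> real^4) \<Rightarrow> real^4 \<Rightarrow> real^4" where
  "lie_deriv xi A x = (\<chi> i. (\<Sum>k\<in>UNIV. xi x $ k * pd k (\<lambda>y. A y $ i) x)
                          + (\<Sum>k\<in>UNIV. A x $ k * pd i (\<lambda>y. xi y $ k) x))"

definition e1 :: "real^4 \<Rightarrow> real^4" where "e1 x = vector [1, 0, 0, 0]"
definition e2 :: "real^4 \<Rightarrow> real^4" where "e2 x = vector [0, 1, 0, 0]"
definition e3 :: "real^4 \<Rightarrow> real^4" where "e3 x = vector [0, 0, 1, 0]"
definition e4 :: "real^4 \<Rightarrow> real^4" where "e4 x = vector [0, 0, 0, 1]"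
definition e12 :: "real^4 \<Rightarrow> real^4" where "e12 x = vector [- x$2, x$1, 0, 0]"
definition e13 :: "real^4 \<Rightarrow> real^4" where "e13 x = vector [x$3, 0, - x$1, 0]"
definition e23 :: "real^4 \<Rightarrow> real^4" where "e23 x = vector [0, - x$3, x$2, 0]"
definition e14 :: "real^4 \<Rightarrow> real^4" where "e14 x = vector [x$4, 0, 0, x$1]"
definition e24 :: "real^4 \<Rightarrow> real^4" where "e24 x = vector [0, x$4, 0, x$2]"
definition e34 :: "real^4 \<Rightarrow> real^4" where "e34 x = vector [0, 0, x$4, x$3]"

definition admits :: "(real^4) set \<Rightarrow> (real^4 \<Rightarrow> real^4) \<Rightarrow> ((real^4) \<Rightarrow> (real^4)) set \<Rightarrow> bool" where
  "admits U A F \<longleftrightarrow> (\<forall>xi\<in>F. \<forall>x\<in>U. lie_deriv xi A x = 0)"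

end

theory Submission
  imports Defs
begin

(* The fields e_1, e_3 generate translations, and e_13 + lam e_24 a rotation of the
   (x^1, x^3)-plane coupled to a boost of the (x^2, x^4)-plane. For differentiable A the three
   Lie derivatives vanish iff dA kills e_1 and e_3 and lam dA(e_24) = (A_3, -lam A_4, -A_1, -lam A_2).
   Along the curve t |-> (t x^1, rho ch(t lam phi), t x^3, rho sh(t lam phi)), which joins the point
   (0, rho, 0, 0) of the ray x^2 > 0 to x, these equations become two linear ODE systems:
   a rotation of (A_1, A_3) with angular velocity phi and a boost of (A_2, A_4) with rapidity
   lam phi. Solving them expresses A x through the values of A on the ray, which are smooth in
   rho because A is. Conversely, differentiating the representation along the same curves gives
   back the equations. *)

lemma Ck_on_cong:
  assumes "open U" "Ck_on k U f" "\<And>x. x \<in> U \<Longrightarrow> f x = g x"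
  shows "Ck_on k U g"
  using assms(2,3)
proof (induction k arbitrary: f g)
  case 0
  then show ?case using continuous_on_cong by force
next
  case (Suc k)
  have g_deriv: "(g has_derivative frechet_derivative f (at x)) (at x)" if "x \<in> U" for x
  proof -
    have "f differentiable at x"
      using Suc.prems(1) assms(1) that by (simp add: differentiable_on_eq_differentiable_at)
    then show ?thesis
      using has_derivative_transform_within_open[OF _ assms(1) that] Suc.prems(2)
      by (blast intro: frechet_derivative_works[THEN iffD1])
  qed
  then have "g differentiable_on U"
    using assms(1) differentiable_def differentiable_on_eq_differentiable_at by blast
  moreover have "Ck_on k U (\<lambda>x. frechet_derivative g (at x) v)" for v
  proof (rule Suc.IH)
    show "Ck_on k U (\<lambda>x. frechet_derivative f (at x) v)" using Suc.prems(1) by simp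
    show "frechet_derivative f (at x) v = frechet_derivative g (at x) v" if "x \<in> U" for x
      using frechet_derivative_at[OF g_deriv[OF that]] by simp
  qed
  ultimately show ?case by simp
qed

lemma Ck_on_compose_linear:
  assumes "open U" "open V" "bounded_linear L" "L ` V \<subseteq> U" "Ck_on k U f"
  shows "Ck_on k V (\<lambda>x. f (L x))"
  using assms(5)
proof (induction k arbitrary: f)
  case 0
  then show ?case
    using continuous_on_compose2[OF _ linear_continuous_on[OF assms(3)] assms(4)] by simp
next
  case (Suc k)
  have comp_deriv:
    "((\<lambda>x. f (L x)) has_derivative (\<lambda>v. frechet_derivative f (at (L x)) (L v))) (at x)"
    if "x \<in> V" for x
  proof -
    have "f differentiable at (L x)"
      using Suc.prems assms(1,4) that by (auto simp: differentiable_on_eq_differentiable_at)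
    then have "(f has_derivative frechet_derivative f (at (L x))) (at (L x))"
      by (rule frechet_derivative_works[THEN iffD1])
    from diff_chain_at[OF bounded_linear_imp_has_derivative[OF assms(3)] this]
    show ?thesis by (simp add: o_def)
  qed
  then have "(\<lambda>x. f (L x)) differentiable_on V"
    using assms(2) differentiable_def differentiable_on_eq_differentiable_at by blast
  moreover have "Ck_on k V (\<lambda>x. frechet_derivative (\<lambda>x. f (L x)) (at x) v)" for v
  proof (rule Ck_on_cong[OF assms(2)])
    show "Ck_on k V (\<lambda>x. frechet_derivative f (at (L x)) (L v))"
      using Suc.IH[of "\<lambda>y. frechet_derivative f (at y) (L v)"] Suc.prems by simp
    show "frechet_derivative f (at (L x)) (L v) = frechet_derivative (\<lambda>x. f (L x)) (at x) v"
      if "x \<in> V" for x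
      using fun_cong[OF frechet_derivative_at[OF comp_deriv[OF that]], of v] by simp
  qed
  ultimately show ?case by simp
qed

lemma Ck_on_linear_compose:
  assumes "open U" "bounded_linear P" "Ck_on k U f"
  shows "Ck_on k U (\<lambda>x. P (f x))"
  using assms(3)
proof (induction k arbitrary: f)
  case 0
  then show ?case
    using continuous_on_compose2[of UNIV P U f, OF linear_continuous_on[OF assms(2)]] by simp
next
  case (Suc k)
  have comp_deriv:
    "((\<lambda>x. P (f x)) has_derivative (\<lambda>v. P (frechet_derivative f (at x) v))) (at x)"
    if "x \<in> U" for x
  proof -
    have "f differentiable at x"
      using Suc.prems assms(1) that by (auto simp: differentiable_on_eq_differentiable_at)
    then have "(f has_derivative frechet_derivative f (at x)) (at x)"
      by (rule frechet_derivative_works[THEN iffD1])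
    from diff_chain_at[OF this bounded_linear_imp_has_derivative[OF assms(2)]]
    show ?thesis by (simp add: o_def)
  qed
  then have "(\<lambda>x. P (f x)) differentiable_on U"
    using assms(1) differentiable_def differentiable_on_eq_differentiable_at by blast
  moreover have "Ck_on k U (\<lambda>x. frechet_derivative (\<lambda>x. P (f x)) (at x) v)" for v
  proof (rule Ck_on_cong[OF assms(1)])
    show "Ck_on k U (\<lambda>x. P (frechet_derivative f (at x) v))"
      using Suc.IH[of "\<lambda>y. frechet_derivative f (at y) v"] Suc.prems by simp
    show "P (frechet_derivative f (at x) v) = frechet_derivative (\<lambda>x. P (f x)) (at x) v"
      if "x \<in> U" for x
      using fun_cong[OF frechet_derivative_at[OF comp_deriv[OF that]], of v] by simp
  qed
  ultimately show ?case by simp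
qed

lemma smooth_on_compose_linear:
  assumes "open U" "open V" "bounded_linear L" "L ` V \<subseteq> U" "smooth_on U f"
  shows "smooth_on V (\<lambda>x. f (L x))"
  using assms Ck_on_compose_linear unfolding smooth_on_def by blast

lemma smooth_on_linear_compose:
  assumes "open U" "bounded_linear P" "smooth_on U f"
  shows "smooth_on U (\<lambda>x. P (f x))"
  using assms Ck_on_linear_compose unfolding smooth_on_def by blast

lemma smooth_on_has_derivative:
  assumes "open U" "smooth_on U f" "x \<in> U"
  shows "(f has_derivative frechet_derivative f (at x)) (at x)"
proof -
  have "Ck_on (Suc 0) U f" using assms(2) unfolding smooth_on_def by blast
  then show ?thesis
    using assms(1,3) frechet_derivative_works by (auto simp: differentiable_on_eq_differentiable_at)
qed

lemma vector_4 [simp]: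
  "(vector [a, b, c, d] :: 'a::zero^4) $ 1 = a"
  "(vector [a, b, c, d] :: 'a::zero^4) $ 2 = b"
  "(vector [a, b, c, d] :: 'a::zero^4) $ 3 = c"
  "(vector [a, b, c, d] :: 'a::zero^4) $ 4 = d"
  unfolding vector_def by simp_all

lemma pd_component:
  assumes "(A has_derivative D) (at x)"
  shows "pd k (\<lambda>y. A y $ i) x = D (axis k 1) $ i"
proof -
  have "((\<lambda>y. A y $ i) has_derivative (\<lambda>v. D v $ i)) (at x)"
    using bounded_linear.has_derivative[OF bounded_linear_vec_nth assms] .
  then show ?thesis unfolding pd_def by (simp add: frechet_derivative_at[symmetric])
qed

lemma linear_component_basis_sum:
  fixes D :: "real^'n \<Rightarrow> real^'m"
  assumes "linear D"
  shows "(\<Sum>k\<in>UNIV. v $ k * D (axis k 1) $ i) = D v $ i"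
proof -
  have "(\<Sum>k\<in>UNIV. v $ k * D (axis k 1) $ i) = (\<Sum>k\<in>UNIV. v $ k *\<^sub>R D (axis k 1)) $ i"
    by simp
  also have "(\<Sum>k\<in>UNIV. v $ k *\<^sub>R D (axis k 1)) = D (\<Sum>k\<in>UNIV. v $ k *\<^sub>R axis k 1)"
    using assms by (simp add: linear_sum linear_scale)
  also have "(\<Sum>k\<in>UNIV. v $ k *\<^sub>R axis k 1) = v"
    using basis_expansion[of v] by (simp add: scalar_mult_eq_scaleR)
  finally show ?thesis .
qed

lemma lie_deriv_eq:
  assumes "(A has_derivative DA) (at x)" "(xi has_derivative Dxi) (at x)"
  shows "lie_deriv xi A x = DA (xi x) + (\<chi> i. \<Sum>k\<in>UNIV. A x $ k * Dxi (axis i 1) $ k)"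
proof -
  have "linear DA" using assms(1) has_derivative_linear by blast
  then show ?thesis
    unfolding lie_deriv_def vec_eq_iff
    by (simp add: pd_component[OF assms(1)] pd_component[OF assms(2)] linear_component_basis_sum)
qed

lemma admits_iff_derivative_conditions:
  fixes A :: "real^4 \<Rightarrow> real^4"
  assumes "\<And>y. y \<in> U \<Longrightarrow> (A has_derivative DA y) (at y)"
  shows "admits U A {(\<lambda>x. e13 x + lam *\<^sub>R e24 x), e1, e3} \<longleftrightarrow>
    (\<forall>y\<in>U. DA y (axis 1 1) = 0 \<and> DA y (axis 3 1) = 0 \<and>
       lam *\<^sub>R DA y (e24 y) = vector [A y $ 3, - (lam * A y $ 4), - (A y $ 1), - (lam * A y $ 2)])"
proof -
  define L where "L y = (vector [y $ 3, lam * y $ 4, - y $ 1, lam * y $ 2] :: real^4)" for y :: "real^4"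
  have xi_eq: "(\<lambda>x. e13 x + lam *\<^sub>R e24 x) = L"
    by (simp add: fun_eq_iff vec_eq_iff forall_4 e13_def e24_def L_def)
  have "linear L"
    by (rule linearI) (simp_all add: vec_eq_iff forall_4 L_def algebra_simps)
  then have L_deriv: "(L has_derivative L) (at y)" for y
    by (simp add: linear_conv_bounded_linear bounded_linear_imp_has_derivative)
  have e1_eq: "e1 = (\<lambda>_. axis 1 1)" and e3_eq: "e3 = (\<lambda>_. axis 3 1)"
    by (simp_all add: fun_eq_iff vec_eq_iff forall_4 e1_def e3_def axis_def)
  have "lie_deriv (\<lambda>x. e13 x + lam *\<^sub>R e24 x) A y = 0 \<and> lie_deriv e1 A y = 0 \<and> lie_deriv e3 A y = 0
    \<longleftrightarrow> DA y (axis 1 1) = 0 \<and> DA y (axis 3 1) = 0 \<and>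
       lam *\<^sub>R DA y (e24 y) = vector [A y $ 3, - (lam * A y $ 4), - (A y $ 1), - (lam * A y $ 2)]"
    if "y \<in> U" for y
  proof -
    have lin: "linear (DA y)" using assms[OF that] has_derivative_linear by blast
    have "L y = y $ 3 *\<^sub>R axis 1 1 - y $ 1 *\<^sub>R axis 3 1 + lam *\<^sub>R e24 y"
      by (simp add: vec_eq_iff forall_4 L_def e24_def axis_def)
    then have "DA y (L y) = y $ 3 *\<^sub>R DA y (axis 1 1) - y $ 1 *\<^sub>R DA y (axis 3 1) + lam *\<^sub>R DA y (e24 y)"
      by (simp add: linear_add[OF lin] linear_diff[OF lin] linear_scale[OF lin])
    moreover have "(\<chi> i. \<Sum>k\<in>UNIV. A y $ k * L (axis i 1) $ k) =
        vector [- A y $ 3, lam * A y $ 4, A y $ 1, lam * A y $ 2]"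
      by (simp add: vec_eq_iff forall_4 sum_4 L_def axis_def)
    ultimately have "lie_deriv (\<lambda>x. e13 x + lam *\<^sub>R e24 x) A y =
        y $ 3 *\<^sub>R DA y (axis 1 1) - y $ 1 *\<^sub>R DA y (axis 3 1) + lam *\<^sub>R DA y (e24 y)
        + vector [- A y $ 3, lam * A y $ 4, A y $ 1, lam * A y $ 2]"
      unfolding xi_eq lie_deriv_eq[OF assms[OF that] L_deriv] by simp
    moreover have "lie_deriv e1 A y = DA y (axis 1 1)" "lie_deriv e3 A y = DA y (axis 3 1)"
      unfolding e1_eq e3_eq lie_deriv_eq[OF assms[OF that] has_derivative_const]
      by (simp_all add: vec_eq_iff)
    ultimately show ?thesis
      by (auto simp: vec_eq_iff forall_4 algebra_simps)
  qed
  then show ?thesis unfolding admits_def by auto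
qed

lemma has_vector_derivative_vector4:
  assumes "(f1 has_real_derivative d1) (at t)" "(f2 has_real_derivative d2) (at t)"
    "(f3 has_real_derivative d3) (at t)" "(f4 has_real_derivative d4) (at t)"
  shows "((\<lambda>s. vector [f1 s, f2 s, f3 s, f4 s] :: real^4) has_vector_derivative
    vector [d1, d2, d3, d4]) (at t)"
proof -
  have vector_eq: "(vector [a, b, c, d] :: real^4) =
      a *\<^sub>R axis 1 1 + b *\<^sub>R axis 2 1 + c *\<^sub>R axis 3 1 + d *\<^sub>R axis 4 1" for a b c d
    by (simp add: vec_eq_iff forall_4 axis_def)
  show ?thesis unfolding vector_eq by (auto intro!: derivative_eq_intros assms)
qed

lemma has_vector_derivative_compose:
  assumes "(A has_derivative D) (at (c t))" "(c has_vector_derivative v) (at t)"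
  shows "((\<lambda>s. A (c s)) has_vector_derivative D v) (at t)"
  using vector_derivative_diff_chain_within[OF assms(2) has_derivative_at_withinI[OF assms(1)]]
  by (simp add: o_def)

lemma has_vector_derivative_vec_nth:
  fixes f :: "real \<Rightarrow> real^'n"
  assumes "(f has_vector_derivative f') (at t)"
  shows "((\<lambda>s. f s $ i) has_real_derivative f' $ i) (at t)"
  using bounded_linear.has_derivative[OF bounded_linear_vec_nth assms[unfolded has_vector_derivative_def]]
  unfolding has_real_derivative_iff_has_vector_derivative has_vector_derivative_def by simp

lemma derivative_along_curve:
  assumes "(A has_derivative D) (at (c t))" "(c has_vector_derivative v) (at t)"
    and "((\<lambda>s. A (c s)) has_vector_derivative w) (at t)"
  shows "D v = w"
  using vector_derivative_unique_at[OF has_vector_derivative_compose[OF assms(1,2)] assms(3)] .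

lemma rotation_ode_solution:
  fixes u v :: "real \<Rightarrow> real"
  assumes "\<And>t. (u has_real_derivative w * v t) (at t)"
    and "\<And>t. (v has_real_derivative - (w * u t)) (at t)"
  shows "u t = u 0 * cos (w * t) + v 0 * sin (w * t)"
    and "v t = - u 0 * sin (w * t) + v 0 * cos (w * t)"
proof -
  define P where "P s = u s * cos (w * s) - v s * sin (w * s)" for s
  define Q where "Q s = u s * sin (w * s) + v s * cos (w * s)" for s
  have "\<forall>s. (P has_real_derivative 0) (at s)" unfolding P_def[abs_def]
    by (auto intro!: derivative_eq_intros assms simp: algebra_simps)
  then have "P t = u 0" using DERIV_isconst_all[of P t 0] by (simp add: P_def)
  moreover have "\<forall>s. (Q has_real_derivative 0) (at s)" unfolding Q_def[abs_def]
    by (auto intro!: derivative_eq_intros assms simp: algebra_simps)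
  then have "Q t = v 0" using DERIV_isconst_all[of Q t 0] by (simp add: Q_def)
  moreover have "u t = P t * cos (w * t) + Q t * sin (w * t)"
    and "v t = - P t * sin (w * t) + Q t * cos (w * t)"
    unfolding P_def Q_def using sin_cos_squared_add[of "w * t"] by algebra+
  ultimately show "u t = u 0 * cos (w * t) + v 0 * sin (w * t)"
    and "v t = - u 0 * sin (w * t) + v 0 * cos (w * t)"
    by simp_all
qed

lemma hyperbolic_ode_solution:
  fixes u v :: "real \<Rightarrow> real"
  assumes "\<And>t. (u has_real_derivative - (w * v t)) (at t)"
    and "\<And>t. (v has_real_derivative - (w * u t)) (at t)"
  shows "u t = u 0 * cosh (w * t) - v 0 * sinh (w * t)"
    and "v t = - u 0 * sinh (w * t) + v 0 * cosh (w * t)"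
proof -
  define R where "R s = u s * cosh (w * s) + v s * sinh (w * s)" for s
  define S where "S s = u s * sinh (w * s) + v s * cosh (w * s)" for s
  have "\<forall>s. (R has_real_derivative 0) (at s)" unfolding R_def[abs_def]
    by (auto intro!: derivative_eq_intros assms simp: algebra_simps)
  then have "R t = u 0" using DERIV_isconst_all[of R t 0] by (simp add: R_def)
  moreover have "\<forall>s. (S has_real_derivative 0) (at s)" unfolding S_def[abs_def]
    by (auto intro!: derivative_eq_intros assms simp: algebra_simps)
  then have "S t = v 0" using DERIV_isconst_all[of S t 0] by (simp add: S_def)
  moreover have "u t = R t * cosh (w * t) - S t * sinh (w * t)"
    and "v t = - R t * sinh (w * t) + S t * cosh (w * t)"
    unfolding R_def S_def using cosh_square_eq[of "w * t"] by algebra+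
  ultimately show "u t = u 0 * cosh (w * t) - v 0 * sinh (w * t)"
    and "v t = - u 0 * sinh (w * t) + v 0 * cosh (w * t)"
    by simp_all
qed

lemma tanh_artanh_real:
  fixes u :: real
  assumes "\<bar>u\<bar> < 1"
  shows "tanh (artanh u) = u"
proof -
  define q where "q = (1 + u) / (1 - u)"
  have q: "q > 0" using assms unfolding q_def by (auto simp: abs_less_iff)
  have "exp (- 2 * artanh u) = 1 / q"
    unfolding artanh_def q_def[symmetric] using q by (simp add: exp_minus exp_ln inverse_eq_divide)
  then have "tanh (artanh u) = (1 - 1 / q) / (1 + 1 / q)" by (simp add: tanh_real_altdef)
  also have "\<dots> = u" using assms q unfolding q_def by (auto simp: field_simps abs_less_iff)
  finally show ?thesis .
qed

lemma abs_sinh_less_cosh_real: "\<bar>sinh t\<bar> < cosh (t::real)"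
  using sinh_less_cosh_real[of t] sinh_less_cosh_real[of "- t"] by (simp add: abs_less_iff)

(* Hyperbolic polar coordinates on the wedge: x^2 = rho ch a and x^4 = rho sh a, where the
   rapidity a is lam phi in the notation of the theorem. *)

definition wedge :: "(real^4) set" where
  "wedge = {x. \<bar>x $ 4\<bar> < x $ 2}"

definition hyperbolic_radius :: "real^4 \<Rightarrow> real" where
  "hyperbolic_radius x = sqrt ((x $ 2)\<^sup>2 - (x $ 4)\<^sup>2)"

definition rapidity :: "real^4 \<Rightarrow> real" where
  "rapidity x = artanh (x $ 4 / x $ 2)"

lemma open_wedge: "open wedge"
  unfolding wedge_def by (intro open_Collect_less continuous_intros)

lemma smooth_on_ray_in_wedge:
  fixes A :: "real^4 \<Rightarrow> 'a::real_normed_vector" and P :: "'a \<Rightarrow> 'b::real_normed_vector"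
  assumes "smooth_on wedge A" "bounded_linear P"
  shows "smooth_on {0<..} (\<lambda>r. P (A (r *\<^sub>R axis 2 1)))"
proof -
  have "(\<lambda>r. r *\<^sub>R axis 2 1) ` {0<..} \<subseteq> wedge" by (auto simp: wedge_def axis_def)
  then have "smooth_on {0<..} (\<lambda>r. A (r *\<^sub>R axis 2 1))"
    using smooth_on_compose_linear[OF open_wedge open_greaterThan bounded_linear_scaleR_left]
      assms(1) by blast
  then show ?thesis using smooth_on_linear_compose[OF open_greaterThan assms(2)] by blast
qed

lemma wedge_polar_coordinates:
  assumes "x \<in> wedge"
  shows "hyperbolic_radius x > 0"
    and "hyperbolic_radius x * cosh (rapidity x) = x $ 2"
    and "hyperbolic_radius x * sinh (rapidity x) = x $ 4"
proof -
  define r a u where "r = hyperbolic_radius x" and "a = rapidity x" and "u = x $ 4 / x $ 2"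
  have x2: "\<bar>x $ 4\<bar> < x $ 2" using assms by (simp add: wedge_def)
  then have "\<bar>u\<bar> < 1" by (simp add: u_def abs_divide)
  then have sinh_a: "sinh a = u * cosh a"
    using tanh_artanh_real by (simp add: a_def rapidity_def u_def[symmetric] tanh_def field_simps)
  have "\<bar>x $ 4\<bar>\<^sup>2 < (x $ 2)\<^sup>2" by (rule power_strict_mono) (use x2 in auto)
  then have x_sq: "(x $ 4)\<^sup>2 < (x $ 2)\<^sup>2" by simp
  then show r_pos: "hyperbolic_radius x > 0" by (simp add: hyperbolic_radius_def)
  have "r\<^sup>2 = (x $ 2)\<^sup>2 * (1 - u\<^sup>2)"
    using x_sq x2 by (simp add: r_def hyperbolic_radius_def u_def power_divide field_simps)
  moreover have "(cosh a)\<^sup>2 * (1 - u\<^sup>2) = 1"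
    using cosh_square_eq[of a] sinh_a by (simp add: power_mult_distrib algebra_simps)
  ultimately have "(r * cosh a)\<^sup>2 = (x $ 2)\<^sup>2" by (simp add: power_mult_distrib mult.commute)
  moreover have "r * cosh a \<ge> 0" using r_pos by (simp add: r_def)
  ultimately have r_cosh: "r * cosh a = x $ 2"
    using x2 power2_eq_iff_nonneg[of "r * cosh a" "x $ 2"] by simp
  then show "hyperbolic_radius x * cosh (rapidity x) = x $ 2" by (simp add: r_def a_def)
  have "r * sinh a = u * x $ 2" using sinh_a r_cosh by (simp add: mult.left_commute)
  then show "hyperbolic_radius x * sinh (rapidity x) = x $ 4"
    using x2 by (simp add: r_def a_def u_def)
qed

lemma wedge_polar_coordinates_inverse:
  fixes r b x1 x3 :: real
  assumes "r > 0"
  defines "x \<equiv> vector [x1, r * cosh b, x3, r * sinh b] :: real^4"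
  shows "x \<in> wedge" "hyperbolic_radius x = r" "rapidity x = b"
proof -
  show "x \<in> wedge"
    using assms abs_sinh_less_cosh_real[of b] by (simp add: x_def wedge_def abs_mult)
  have "(r * cosh b)\<^sup>2 - (r * sinh b)\<^sup>2 = r\<^sup>2"
    by (simp add: power_mult_distrib cosh_square_eq algebra_simps)
  then show "hyperbolic_radius x = r" using assms by (simp add: x_def hyperbolic_radius_def)
  have "(r * sinh b) / (r * cosh b) = tanh b" using assms by (simp add: tanh_def)
  then show "rapidity x = b" by (simp add: x_def rapidity_def artanh_tanh_real)
qed

definition invariant_potential :: "real \<Rightarrow> (real \<Rightarrow> real) \<Rightarrow> (real \<Rightarrow> real) \<Rightarrow>
    (real \<Rightarrow> real) \<Rightarrow> (real \<Rightarrow> real) \<Rightarrow> real^4 \<Rightarrow> real^4"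
  where "invariant_potential lam C1 C2 C3 C4 x =
    (let r = hyperbolic_radius x; a = rapidity x in
      vector [C1 r * cos (a / lam) + C2 r * sin (a / lam),
              C3 r * cosh a + C4 r * sinh a,
              - C1 r * sin (a / lam) + C2 r * cos (a / lam),
              - C3 r * sinh a - C4 r * cosh a])"

lemma wedge_orbit_from_ray:
  assumes "x \<in> wedge"
  shows "\<exists>\<gamma>. (\<forall>t. \<gamma> t \<in> wedge) \<and> \<gamma> 0 = hyperbolic_radius x *\<^sub>R axis 2 1 \<and> \<gamma> 1 = x \<and>
    (\<forall>t. (\<gamma> has_vector_derivative
      x $ 1 *\<^sub>R axis 1 1 + x $ 3 *\<^sub>R axis 3 1 + rapidity x *\<^sub>R e24 (\<gamma> t)) (at t))"
proof (intro exI conjI allI)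
  define r a where "r = hyperbolic_radius x" and "a = rapidity x"
  have "r > 0" and r_cosh: "r * cosh a = x $ 2" and r_sinh: "r * sinh a = x $ 4"
    using wedge_polar_coordinates[OF assms] by (simp_all add: r_def a_def)
  define \<gamma> where "\<gamma> t = (vector [t * x $ 1, r * cosh (a * t), t * x $ 3, r * sinh (a * t)] :: real^4)"
    for t
  show "\<gamma> t \<in> wedge" for t
    using wedge_polar_coordinates_inverse(1)[OF \<open>r > 0\<close>] by (simp add: \<gamma>_def)
  show "\<gamma> 0 = hyperbolic_radius x *\<^sub>R axis 2 1" "\<gamma> 1 = x"
    by (simp_all add: \<gamma>_def vec_eq_iff forall_4 axis_def r_def[symmetric] r_cosh r_sinh)
  have "(\<gamma> has_vector_derivative
      vector [x $ 1, r * (sinh (a * t) * a), x $ 3, r * (cosh (a * t) * a)]) (at t)" for t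
    unfolding \<gamma>_def by (rule has_vector_derivative_vector4) (auto intro!: derivative_eq_intros)
  moreover have "vector [x $ 1, r * (sinh (a * t) * a), x $ 3, r * (cosh (a * t) * a)] =
      x $ 1 *\<^sub>R axis 1 1 + x $ 3 *\<^sub>R axis 3 1 + a *\<^sub>R e24 (\<gamma> t)" for t
    by (simp add: vec_eq_iff forall_4 axis_def e24_def \<gamma>_def)
  ultimately show "(\<gamma> has_vector_derivative
      x $ 1 *\<^sub>R axis 1 1 + x $ 3 *\<^sub>R axis 3 1 + rapidity x *\<^sub>R e24 (\<gamma> t)) (at t)" for t
    by (simp add: a_def)
qed

lemma derivative_conditions_imp_invariant_potential:
  fixes A :: "real^4 \<Rightarrow> real^4"
  assumes "lam \<noteq> 0" "x \<in> wedge"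
    and deriv: "\<And>y. y \<in> wedge \<Longrightarrow> (A has_derivative DA y) (at y)"
    and conds: "\<forall>y\<in>wedge. DA y (axis 1 1) = 0 \<and> DA y (axis 3 1) = 0 \<and>
       lam *\<^sub>R DA y (e24 y) = vector [A y $ 3, - (lam * A y $ 4), - (A y $ 1), - (lam * A y $ 2)]"
  shows "A x = invariant_potential lam
    (\<lambda>r. A (r *\<^sub>R axis 2 1) $ 1) (\<lambda>r. A (r *\<^sub>R axis 2 1) $ 3)
    (\<lambda>r. A (r *\<^sub>R axis 2 1) $ 2) (\<lambda>r. - A (r *\<^sub>R axis 2 1) $ 4) x"
proof -
  define a p where "a = rapidity x" and "p = a / lam"
  obtain \<gamma> where \<gamma>_wedge: "\<And>t. \<gamma> t \<in> wedge"
    and \<gamma>_ends: "\<gamma> 0 = hyperbolic_radius x *\<^sub>R axis 2 1" "\<gamma> 1 = x"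
    and \<gamma>_deriv: "\<And>t. (\<gamma> has_vector_derivative
      x $ 1 *\<^sub>R axis 1 1 + x $ 3 *\<^sub>R axis 3 1 + a *\<^sub>R e24 (\<gamma> t)) (at t)"
    using wedge_orbit_from_ray[OF \<open>x \<in> wedge\<close>] unfolding a_def by blast
  have A_deriv: "((\<lambda>s. A (\<gamma> s)) has_vector_derivative p *\<^sub>R
      vector [A (\<gamma> t) $ 3, - (lam * A (\<gamma> t) $ 4), - (A (\<gamma> t) $ 1), - (lam * A (\<gamma> t) $ 2)]) (at t)"
    for t
  proof -
    have lin: "linear (DA (\<gamma> t))" using deriv[OF \<gamma>_wedge] has_derivative_linear by blast
    have translation_invariance: "DA (\<gamma> t) (axis 1 1) = 0" "DA (\<gamma> t) (axis 3 1) = 0"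
      using conds \<gamma>_wedge by auto
    have "DA (\<gamma> t) (x $ 1 *\<^sub>R axis 1 1 + x $ 3 *\<^sub>R axis 3 1 + a *\<^sub>R e24 (\<gamma> t)) =
        p *\<^sub>R (lam *\<^sub>R DA (\<gamma> t) (e24 (\<gamma> t)))"
      using translation_invariance \<open>lam \<noteq> 0\<close>
      by (simp add: linear_add[OF lin] linear_scale[OF lin] p_def)
    also have "\<dots> = p *\<^sub>R
        vector [A (\<gamma> t) $ 3, - (lam * A (\<gamma> t) $ 4), - (A (\<gamma> t) $ 1), - (lam * A (\<gamma> t) $ 2)]"
      using conds \<gamma>_wedge[of t] by simp
    finally show ?thesis
      using has_vector_derivative_compose[OF deriv[OF \<gamma>_wedge[of t]] \<gamma>_deriv[of t]] by simp
  qed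
  have "((\<lambda>s. A (\<gamma> s) $ 1) has_real_derivative p * A (\<gamma> t) $ 3) (at t)"
    and "((\<lambda>s. A (\<gamma> s) $ 3) has_real_derivative - (p * A (\<gamma> t) $ 1)) (at t)"
    and "((\<lambda>s. A (\<gamma> s) $ 2) has_real_derivative - (a * A (\<gamma> t) $ 4)) (at t)"
    and "((\<lambda>s. A (\<gamma> s) $ 4) has_real_derivative - (a * A (\<gamma> t) $ 2)) (at t)" for t
    using has_vector_derivative_vec_nth[OF A_deriv, where i = 1]
      has_vector_derivative_vec_nth[OF A_deriv, where i = 2]
      has_vector_derivative_vec_nth[OF A_deriv, where i = 3]
      has_vector_derivative_vec_nth[OF A_deriv, where i = 4] \<open>lam \<noteq> 0\<close>
    by (simp_all add: p_def)
  note rotation = rotation_ode_solution[OF this(1,2), where t = 1]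
    and boost = hyperbolic_ode_solution[OF this(3,4), where t = 1]
  show ?thesis
    using rotation boost
    unfolding invariant_potential_def Let_def a_def[symmetric] p_def[symmetric]
    by (simp add: \<gamma>_ends vec_eq_iff forall_4)
qed

lemma invariant_potential_on_hyperbola:
  assumes "r > 0"
  shows "invariant_potential lam C1 C2 C3 C4 (vector [x1, r * cosh b, x3, r * sinh b]) =
    vector [C1 r * cos (b / lam) + C2 r * sin (b / lam), C3 r * cosh b + C4 r * sinh b,
      - C1 r * sin (b / lam) + C2 r * cos (b / lam), - C3 r * sinh b - C4 r * cosh b]"
  using wedge_polar_coordinates_inverse[OF assms] by (simp add: invariant_potential_def Let_def)

lemma invariant_potential_translation_invariant:
  assumes "x \<in> wedge" "k = 1 \<or> k = 3"
  shows "x + s *\<^sub>R axis k 1 \<in> wedge"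
    and "invariant_potential lam C1 C2 C3 C4 (x + s *\<^sub>R axis k 1) = invariant_potential lam C1 C2 C3 C4 x"
proof -
  have unchanged: "(x + s *\<^sub>R axis k 1) $ 2 = x $ 2" "(x + s *\<^sub>R axis k 1) $ 4 = x $ 4"
    using assms(2) by (auto simp: axis_def)
  show "x + s *\<^sub>R axis k 1 \<in> wedge"
    using assms(1) unfolding wedge_def mem_Collect_eq unchanged .
  show "invariant_potential lam C1 C2 C3 C4 (x + s *\<^sub>R axis k 1) = invariant_potential lam C1 C2 C3 C4 x"
    unfolding invariant_potential_def hyperbolic_radius_def rapidity_def by (simp only: unchanged)
qed

lemma invariant_potential_imp_translation_derivatives:
  fixes A :: "real^4 \<Rightarrow> real^4"
  assumes "y \<in> wedge" "(A has_derivative D) (at y)" "k = 1 \<or> k = 3"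
    and rep: "\<And>x. x \<in> wedge \<Longrightarrow> A x = invariant_potential lam C1 C2 C3 C4 x"
  shows "D (axis k 1) = 0"
proof -
  have line: "((\<lambda>s. y + s *\<^sub>R axis k 1) has_vector_derivative axis k 1) (at 0)"
    by (auto intro!: derivative_eq_intros)
  have "A (y + s *\<^sub>R axis k 1) = A y" for s
    using invariant_potential_translation_invariant[OF assms(1,3)] rep assms(1) by metis
  then have "((\<lambda>s. A (y + s *\<^sub>R axis k 1)) has_vector_derivative 0) (at 0)" by simp
  from derivative_along_curve[OF _ line this] assms(2) show ?thesis by simp
qed

lemma invariant_potential_imp_boost_derivative:
  fixes A :: "real^4 \<Rightarrow> real^4"
  assumes "lam \<noteq> 0" "y \<in> wedge" and deriv: "(A has_derivative D) (at y)"
    and rep: "\<And>x. x \<in> wedge \<Longrightarrow> A x = invariant_potential lam C1 C2 C3 C4 x"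
  shows "lam *\<^sub>R D (e24 y) = vector [A y $ 3, - (lam * A y $ 4), - (A y $ 1), - (lam * A y $ 2)]"
proof -
  define r a where "r = hyperbolic_radius y" and "a = rapidity y"
  have "r > 0" and r_cosh: "r * cosh a = y $ 2" and r_sinh: "r * sinh a = y $ 4"
    using wedge_polar_coordinates[OF \<open>y \<in> wedge\<close>] by (simp_all add: r_def a_def)
  define c where "c s = (vector [y $ 1, r * cosh (a + s), y $ 3, r * sinh (a + s)] :: real^4)" for s
  define F where "F b = (vector [C1 r * cos (b / lam) + C2 r * sin (b / lam),
    C3 r * cosh b + C4 r * sinh b, - C1 r * sin (b / lam) + C2 r * cos (b / lam),
    - C3 r * sinh b - C4 r * cosh b] :: real^4)" for b
  have A_along_c: "A (c s) = F (a + s)" for s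
    using rep[OF wedge_polar_coordinates_inverse(1)[OF \<open>r > 0\<close>]]
      invariant_potential_on_hyperbola[OF \<open>r > 0\<close>]
    by (simp add: c_def F_def)
  have "c 0 = y" by (simp add: c_def vec_eq_iff forall_4 r_cosh r_sinh)
  have "((\<lambda>s. A (c s)) has_vector_derivative
      vector [(- C1 r * sin (a / lam) + C2 r * cos (a / lam)) / lam, C3 r * sinh a + C4 r * cosh a,
        (- C1 r * cos (a / lam) - C2 r * sin (a / lam)) / lam, - C3 r * cosh a - C4 r * sinh a])
      (at 0)"
    unfolding A_along_c F_def using \<open>lam \<noteq> 0\<close>
    by (intro has_vector_derivative_vector4) (auto intro!: derivative_eq_intros simp: field_simps)
  moreover have "(c has_vector_derivative e24 y) (at 0)"
  proof -
    have "(c has_vector_derivative vector [0, r * sinh a, 0, r * cosh a]) (at 0)"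
      unfolding c_def by (rule has_vector_derivative_vector4) (auto intro!: derivative_eq_intros)
    then show ?thesis by (simp add: e24_def r_cosh r_sinh)
  qed
  ultimately have D_boost: "D (e24 y) =
      vector [(- C1 r * sin (a / lam) + C2 r * cos (a / lam)) / lam, C3 r * sinh a + C4 r * cosh a,
        (- C1 r * cos (a / lam) - C2 r * sin (a / lam)) / lam, - C3 r * cosh a - C4 r * sinh a]"
    using derivative_along_curve[of A D c 0] deriv \<open>c 0 = y\<close> by blast
  have A_y: "A y = F a" using A_along_c[of 0] \<open>c 0 = y\<close> by simp
  show ?thesis
    using \<open>lam \<noteq> 0\<close> unfolding D_boost A_y F_def by (simp add: vec_eq_iff forall_4 field_simps)
qed

lemma admits_iff_invariant_potential:
  fixes A :: "real^4 \<Rightarrow> real^4"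
  assumes "lam \<noteq> 0" and smooth: "smooth_on wedge A"
  shows "admits wedge A {(\<lambda>x. e13 x + lam *\<^sub>R e24 x), e1, e3} \<longleftrightarrow>
    (\<exists>C1 C2 C3 C4. smooth_on {0<..} C1 \<and> smooth_on {0<..} C2 \<and> smooth_on {0<..} C3 \<and>
      smooth_on {0<..} C4 \<and> (\<forall>x\<in>wedge. A x = invariant_potential lam C1 C2 C3 C4 x))"
    (is "?admits \<longleftrightarrow> ?representable")
proof -
  have deriv: "(A has_derivative frechet_derivative A (at y)) (at y)" if "y \<in> wedge" for y
    using smooth_on_has_derivative[OF open_wedge smooth that] .
  have admits_iff: "?admits \<longleftrightarrow> (\<forall>y\<in>wedge. frechet_derivative A (at y) (axis 1 1) = 0 \<and>
      frechet_derivative A (at y) (axis 3 1) = 0 \<and>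
      lam *\<^sub>R frechet_derivative A (at y) (e24 y) =
        vector [A y $ 3, - (lam * A y $ 4), - (A y $ 1), - (lam * A y $ 2)])"
    by (rule admits_iff_derivative_conditions) (rule deriv)
  show ?thesis
  proof
    assume ?admits
    define C1 C2 C3 C4 where "C1 = (\<lambda>r. A (r *\<^sub>R axis 2 1) $ 1)"
      and "C2 = (\<lambda>r. A (r *\<^sub>R axis 2 1) $ 3)" and "C3 = (\<lambda>r. A (r *\<^sub>R axis 2 1) $ 2)"
      and "C4 = (\<lambda>r. - A (r *\<^sub>R axis 2 1) $ 4)"
    have "\<forall>x\<in>wedge. A x = invariant_potential lam C1 C2 C3 C4 x"
      unfolding C1_def C2_def C3_def C4_def
      using derivative_conditions_imp_invariant_potential[OF \<open>lam \<noteq> 0\<close> _ deriv]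
        \<open>?admits\<close> admits_iff
      by blast
    moreover have "smooth_on {0<..} C1" "smooth_on {0<..} C2" "smooth_on {0<..} C3" "smooth_on {0<..} C4"
      unfolding C1_def C2_def C3_def C4_def
      using smooth_on_ray_in_wedge[OF smooth bounded_linear_vec_nth]
        smooth_on_ray_in_wedge[OF smooth bounded_linear_minus[OF bounded_linear_vec_nth]]
      by auto
    ultimately show ?representable by blast
  next
    assume ?representable
    then obtain C1 C2 C3 C4
      where rep: "\<And>x. x \<in> wedge \<Longrightarrow> A x = invariant_potential lam C1 C2 C3 C4 x"
      by blast
    show ?admits
    proof (rule admits_iff[THEN iffD2], intro ballI conjI)
      fix y assume "y \<in> wedge"
      note deriv_y = deriv[OF \<open>y \<in> wedge\<close>]
      show "frechet_derivative A (at y) (axis 1 1) = 0" "frechet_derivative A (at y) (axis 3 1) = 0"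
        using invariant_potential_imp_translation_derivatives[OF \<open>y \<in> wedge\<close> deriv_y _ rep]
        by simp_all
      show "lam *\<^sub>R frechet_derivative A (at y) (e24 y) =
          vector [A y $ 3, - (lam * A y $ 4), - (A y $ 1), - (lam * A y $ 2)]"
        using invariant_potential_imp_boost_derivative[OF \<open>lam \<noteq> 0\<close> \<open>y \<in> wedge\<close> deriv_y rep] .
    qed
  qed
qed

theorem mainTheorem7:
  fixes lam :: real and A :: "real^4 \<Rightarrow> real^4"
  defines "U \<equiv> {x :: real^4. x$2 > \<bar>x$4\<bar>}"
  defines "rho \<equiv> (\<lambda>x :: real^4. sqrt ((x$2)\<^sup>2 - (x$4)\<^sup>2))"
  defines "phi \<equiv> (\<lambda>x :: real^4. artanh (x$4 / x$2) / lam)"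
  assumes "lam \<noteq> 0"
    and "smooth_on U A"
  shows "admits U A {(\<lambda>x. e13 x + lam *\<^sub>R e24 x), e1, e3} \<longleftrightarrow>
    (\<exists>C1 C2 C3 C4 :: real \<Rightarrow> real.
       smooth_on {0<..} C1 \<and> smooth_on {0<..} C2 \<and> smooth_on {0<..} C3 \<and> smooth_on {0<..} C4 \<and>
       (\<forall>x\<in>U.
          A x $ 1 = C1 (rho x) * cos (phi x) + C2 (rho x) * sin (phi x) \<and>
          A x $ 2 = C3 (rho x) * cosh (lam * phi x) + C4 (rho x) * sinh (lam * phi x) \<and>
          A x $ 3 = - C1 (rho x) * sin (phi x) + C2 (rho x) * cos (phi x) \<and>
          A x $ 4 = - C3 (rho x) * sinh (lam * phi x) - C4 (rho x) * cosh (lam * phi x)))"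
proof -
  have U: "U = wedge" by (simp add: U_def wedge_def)
  have invariant_potential_iff: "A x = invariant_potential lam C1 C2 C3 C4 x \<longleftrightarrow>
      A x $ 1 = C1 (rho x) * cos (phi x) + C2 (rho x) * sin (phi x) \<and>
      A x $ 2 = C3 (rho x) * cosh (lam * phi x) + C4 (rho x) * sinh (lam * phi x) \<and>
      A x $ 3 = - C1 (rho x) * sin (phi x) + C2 (rho x) * cos (phi x) \<and>
      A x $ 4 = - C3 (rho x) * sinh (lam * phi x) - C4 (rho x) * cosh (lam * phi x)"
    for x C1 C2 C3 C4
    using \<open>lam \<noteq> 0\<close>
    by (simp add: invariant_potential_def Let_def rho_def phi_def hyperbolic_radius_def
        rapidity_def vec_eq_iff forall_4)
  have "smooth_on wedge A" using \<open>smooth_on U A\<close> U by simp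
  from admits_iff_invariant_potential[OF \<open>lam \<noteq> 0\<close> this] show ?thesis
    unfolding U invariant_potential_iff .
qed

end
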